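(* Let $m,n\in\mathbb N$, $M_A=M_m(\mathbb C)$, $M_B=M_n(\mathbb C)$, and let $U_A\in M_A$, $U_B\in M_B$ be unitary matrices. If a quantum $U_A\otimes U_B$-state $\rho\in M_A\otimes M_B$ is $U_A\otimes U_B$-separable, then $\rho$ is $U_A\otimes U_B$-positive partial transpose, i.e. $(\overline{U_A}\otimes U_B^* )\,\rho^{\tau}$ is positive semidefinite, where $\rho^\tau=(t\otimes\mathrm{id})(\rho)$, $t$ is the transpose on $M_A$, and $\overline{U_A}$ is the entrywise complex conjugate of $U_A$.
   Context: For a unitary $U\in M_k(\mathbb C)$, a matrix $X\in M_k(\mathbb C)$ is $U$-positive if $U^*X$ is positive semidefinite, and is a quantum $U$-state if moreover $\mathrm{Tr}(U^*X)=1$. A quantum $U_A\otimes U_B$-state $\rho\in M_A\otimes M_B$ is a product $U_A\otimes U_B$-state if $\rho=\rho_A\otimes\rho_B$ with $\rho_A\in M_A$ $U_A$-positive and $\rho_B\in M_B$ $U_B$-positive; it is $U_A\otimes U_B$-separable if it is a convex combination of product $U_A\otimes U_B$-states. *)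

theory Defs
  imports "Jordan_Normal_Form.Matrix"
begin

definition conj_mat :: "complex mat \<Rightarrow> complex mat" where
  "conj_mat A = map_mat cnj A"

definition adj :: "complex mat \<Rightarrow> complex mat" where
  "adj A = transpose_mat (conj_mat A)"

definition unitary :: "nat \<Rightarrow> complex mat \<Rightarrow> bool" where
  "unitary k U \<longleftrightarrow> U \<in> carrier_mat k k \<and> adj U * U = 1\<^sub>m k \<and> U * adj U = 1\<^sub>m k"

definition psd :: "nat \<Rightarrow> complex mat \<Rightarrow> bool" where
  "psd k X \<longleftrightarrow> X \<in> carrier_mat k k \<and> adj X = X \<and>
     (\<forall>v \<in> carrier_vec k. let q = (X *\<^sub>v v) \<bullet>c v in Im q = 0 \<and> Re q \<ge> 0)"

definition U_positive :: "nat \<Rightarrow> complex mat \<Rightarrow> complex mat \<Rightarrow> bool" where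
  "U_positive k U X \<longleftrightarrow> X \<in> carrier_mat k k \<and> psd k (adj U * X)"

definition mtrace :: "complex mat \<Rightarrow> complex" where
  "mtrace A = (\<Sum>i<dim_row A. A $$ (i,i))"

definition quantum_U_state :: "nat \<Rightarrow> complex mat \<Rightarrow> complex mat \<Rightarrow> bool" where
  "quantum_U_state k U X \<longleftrightarrow> U_positive k U X \<and> mtrace (adj U * X) = 1"

text \<open>Kronecker product of an m x m and an n x n matrix, with the index of
  M_A \<otimes> M_B identified with (a,b) \<mapsto> a*n + b.\<close>
definition kron :: "nat \<Rightarrow> nat \<Rightarrow> complex mat \<Rightarrow> complex mat \<Rightarrow> complex mat" where
  "kron m n A B = mat (m*n) (m*n)
     (\<lambda>(i,j). A $$ (i div n, j div n) * B $$ (i mod n, j mod n))"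

text \<open>Partial transpose (t \<otimes> id) on the first tensor factor.\<close>
definition ptrans :: "nat \<Rightarrow> nat \<Rightarrow> complex mat \<Rightarrow> complex mat" where
  "ptrans m n \<rho> = mat (m*n) (m*n)
     (\<lambda>(i,j). \<rho> $$ ((j div n) * n + i mod n, (i div n) * n + j mod n))"

definition product_state ::
  "nat \<Rightarrow> nat \<Rightarrow> complex mat \<Rightarrow> complex mat \<Rightarrow> complex mat \<Rightarrow> bool" where
  "product_state m n UA UB \<rho> \<longleftrightarrow>
     quantum_U_state (m*n) (kron m n UA UB) \<rho> \<and>
     (\<exists>\<rho>A \<rho>B. \<rho> = kron m n \<rho>A \<rho>B \<and> U_positive m UA \<rho>A \<and> U_positive n UB \<rho>B)"

definition separable ::
  "nat \<Rightarrow> nat \<Rightarrow> complex mat \<Rightarrow> complex mat \<Rightarrow> complex mat \<Rightarrow> bool" where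
  "separable m n UA UB \<rho> \<longleftrightarrow>
     (\<exists>(K::nat) (p::nat \<Rightarrow> real) (\<sigma>::nat \<Rightarrow> complex mat).
        (\<forall>i<K. p i \<ge> 0 \<and> product_state m n UA UB (\<sigma> i)) \<and>
        (\<Sum>i<K. p i) = 1 \<and>
        \<rho> = mat (m*n) (m*n) (\<lambda>ij. \<Sum>i<K. complex_of_real (p i) * \<sigma> i $$ ij))"

end

(*
  Write rho = sum_l p_l (rA_l (x) rB_l). The partial transpose acts factorwise, so by the
  mixed-product rule the matrix in question is sum_l p_l (conj UA * rA_l^T) (x) (adj UB * rB_l).
  Here conj UA * rA^T is the transpose of rA * adj UA = UA (adj UA * rA) adj UA, a congruence
  of the positive semidefinite matrix adj UA * rA. Positive semidefiniteness survives
  transposition, congruence, nonnegative combinations and Kronecker products; for the last,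
  a Gram decomposition B = sum_l y_l y_l^H (by induction on the dimension via Schur complements)
  writes A (x) B as a sum of congruences of A.
*)
theory Submission
  imports Defs "HOL-Library.Complex_Order"
begin

definition quad_form :: "nat \<Rightarrow> (nat \<Rightarrow> nat \<Rightarrow> complex) \<Rightarrow> (nat \<Rightarrow> complex) \<Rightarrow> complex" where
  "quad_form k Q v = (\<Sum>i<k. \<Sum>j<k. cnj (v i) * Q i j * v j)"

text \<open>Working with entry functions rather than matrices lets the dimension vary in inductions.\<close>

definition psd_fun :: "nat \<Rightarrow> (nat \<Rightarrow> nat \<Rightarrow> complex) \<Rightarrow> bool" where
  "psd_fun k Q \<longleftrightarrow> (\<forall>i<k. \<forall>j<k. Q j i = cnj (Q i j)) \<and> (\<forall>v. 0 \<le> quad_form k Q v)"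

lemma psd_funI:
  assumes "\<And>i j. i < k \<Longrightarrow> j < k \<Longrightarrow> Q j i = cnj (Q i j)" and "\<And>v. 0 \<le> quad_form k Q v"
  shows "psd_fun k Q"
  using assms unfolding psd_fun_def by blast

lemma psd_fun_hermitian: "psd_fun k Q \<Longrightarrow> i < k \<Longrightarrow> j < k \<Longrightarrow> Q j i = cnj (Q i j)"
  unfolding psd_fun_def by blast

lemma psd_fun_quad_form_nonneg: "psd_fun k Q \<Longrightarrow> 0 \<le> quad_form k Q v"
  unfolding psd_fun_def by blast

lemma quad_form_cong:
  "(\<And>i. i < k \<Longrightarrow> v i = w i) \<Longrightarrow> (\<And>i j. i < k \<Longrightarrow> j < k \<Longrightarrow> Q i j = R i j) \<Longrightarrow>
   quad_form k Q v = quad_form k R w"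
  unfolding quad_form_def by (intro sum.cong refl) simp_all

lemma psd_fun_cong:
  "(\<And>i j. i < k \<Longrightarrow> j < k \<Longrightarrow> Q i j = R i j) \<Longrightarrow> psd_fun k Q \<longleftrightarrow> psd_fun k R"
  unfolding psd_fun_def by (simp cong: quad_form_cong)

lemma quad_form_altdef: "quad_form k Q v = (\<Sum>i<k. cnj (v i) * (\<Sum>j<k. Q i j * v j))"
  unfolding quad_form_def by (simp add: sum_distrib_left mult.assoc)

lemma quad_form_Suc:
  "quad_form (Suc n) Q v = quad_form n Q v + cnj (v n) * (\<Sum>j<n. Q n j * v j)
     + (\<Sum>i<n. cnj (v i) * Q i n) * v n + cnj (v n) * Q n n * v n"
  by (simp add: quad_form_def sum.distrib sum_distrib_left sum_distrib_right ac_simps)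

lemma sum_mult_two_point:
  fixes f :: "nat \<Rightarrow> 'a::comm_semiring_1"
  assumes "a < k" "b < k" "a \<noteq> b"
  shows "(\<Sum>j<k. f j * (if j = a then x else if j = b then y else 0)) = f a * x + f b * y"
proof -
  have "(\<Sum>j<k. f j * (if j = a then x else if j = b then y else 0)) =
    (\<Sum>j<k. (if j = a then f a * x else 0) + (if j = b then f b * y else 0))"
    using assms by (intro sum.cong) auto
  then show ?thesis
    using assms by (simp add: sum.distrib)
qed

lemma quad_form_two_point:
  assumes "a < k" "b < k" "a \<noteq> b"
  shows "quad_form k Q (\<lambda>i. if i = a then x else if i = b then y else 0) =
    cnj x * Q a a * x + cnj x * Q a b * y + cnj y * Q b a * x + cnj y * Q b b * y"
proof -
  let ?v = "\<lambda>i. if i = a then x else if i = b then y else 0"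
  have inner: "(\<Sum>j<k. Q i j * ?v j) = Q i a * x + Q i b * y" for i
    by (rule sum_mult_two_point[OF assms])
  have "quad_form k Q ?v =
    (\<Sum>i<k. (Q i a * x + Q i b * y) * (if i = a then cnj x else if i = b then cnj y else 0))"
    unfolding quad_form_altdef inner by (intro sum.cong) auto
  also have "\<dots> = (Q a a * x + Q a b * y) * cnj x + (Q b a * x + Q b b * y) * cnj y"
    by (rule sum_mult_two_point[OF assms])
  finally show ?thesis
    by (simp add: algebra_simps)
qed

lemma quad_form_unit_vector:
  assumes "a < k"
  shows "quad_form k Q (\<lambda>i. if i = a then 1 else 0) = Q a a"
proof -
  have delta: "(\<Sum>j<k. f j * (if j = a then 1 else 0)) = f a" for f :: "nat \<Rightarrow> complex"
    using assms by (simp add: if_distrib[where f="\<lambda>x. f _ * x"] cong: if_cong)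
  have "quad_form k Q (\<lambda>i. if i = a then 1 else 0) = (\<Sum>i<k. Q i a * (if i = a then 1 else 0))"
    unfolding quad_form_altdef delta[of "Q _"] by (intro sum.cong) auto
  also have "\<dots> = Q a a"
    by (rule delta)
  finally show ?thesis .
qed

lemma psd_fun_diag_nonneg: "psd_fun k Q \<Longrightarrow> a < k \<Longrightarrow> 0 \<le> Q a a"
  by (metis psd_fun_quad_form_nonneg quad_form_unit_vector)

text \<open>The vector \<open>t e\<^sub>a + e\<^sub>j\<close> with \<open>t = -s Q a j\<close> makes the form \<open>Q j j - 2 s |Q a j|\<^sup>2\<close>,
  which is negative for large real \<open>s\<close>.\<close>

lemma psd_fun_zero_diag:
  assumes Q: "psd_fun k Q" and a: "a < k" and j: "j < k" and zero: "Q a a = 0"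
  shows "Q a j = 0"
proof (rule ccontr)
  assume nz: "Q a j \<noteq> 0"
  then have "a \<noteq> j"
    using zero by auto
  define N where "N = (cmod (Q a j))\<^sup>2"
  define s where "s = (Re (Q j j) + 1) / (2 * N)"
  define t where "t = - of_real s * Q a j"
  have "N > 0"
    using nz unfolding N_def by simp
  have norm: "cnj (Q a j) * Q a j = of_real N"
    unfolding N_def complex_norm_square by (rule mult.commute)
  let ?w = "\<lambda>i. if i = a then t else if i = j then 1 else 0"
  have "quad_form k Q ?w = Q j j - 2 * of_real (s * N)"
    using quad_form_two_point[OF a j \<open>a \<noteq> j\<close>] psd_fun_hermitian[OF Q a j] zero norm
    by (simp add: t_def algebra_simps)
  also have "\<dots> = Q j j - of_real (Re (Q j j) + 1)"
    using \<open>N > 0\<close> by (simp add: s_def field_simps)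
  also have "\<dots> = -1"
    using psd_fun_diag_nonneg[OF Q j] by (simp add: complex_eq_iff less_eq_complex_def)
  finally show False
    using psd_fun_quad_form_nonneg[OF Q, of ?w] by (simp add: less_eq_complex_def)
qed

text \<open>As \<open>x / 0 = 0\<close>, for \<open>Q n n = 0\<close> this is just the restriction of \<open>Q\<close>, which is
  still correct.\<close>

lemma psd_fun_schur_complement:
  assumes Q: "psd_fun (Suc n) Q"
  shows "psd_fun n (\<lambda>i j. Q i j - Q i n * Q n j / Q n n)"
proof -
  have herm: "Q j i = cnj (Q i j)" if "i \<le> n" "j \<le> n" for i j
    using that by (intro psd_fun_hermitian[OF Q]) auto
  have "cnj (Q n n) = Q n n"
    using herm[of n n] by simp
  show ?thesis
  proof (rule psd_funI)
    fix i j assume "i < n" "j < n"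
    then show "Q j i - Q j n * Q n i / Q n n = cnj (Q i j - Q i n * Q n j / Q n n)"
      using herm[of i j] herm[of n i] herm[of n j] \<open>cnj (Q n n) = Q n n\<close> by simp
  next
    fix v
    define s where "s = (\<Sum>j<n. Q n j * v j)"
    define w where "w i = (if i < n then v i else - s / Q n n)" for i
    have col: "(\<Sum>i<n. cnj (v i) * Q i n) = cnj s"
      unfolding s_def cnj_sum using herm[of _ n] by (intro sum.cong) simp_all
    have "quad_form n (\<lambda>i j. Q i j - Q i n * Q n j / Q n n) v =
      quad_form n Q v - (\<Sum>i<n. \<Sum>j<n. cnj (v i) * Q i n * (Q n j * v j)) / Q n n"
      unfolding quad_form_def sum_divide_distrib sum_subtractf[symmetric]
      by (intro sum.cong refl) (simp add: algebra_simps)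
    also have "\<dots> = quad_form n Q v - cnj s * s / Q n n"
      unfolding col[symmetric] unfolding s_def sum_product ..
    also have "\<dots> = quad_form (Suc n) Q w"
    proof -
      have "quad_form n Q w = quad_form n Q v"
        by (rule quad_form_cong) (simp_all add: w_def)
      moreover have "(\<Sum>j<n. Q n j * w j) = s" "(\<Sum>i<n. cnj (w i) * Q i n) = cnj s"
        using col by (simp_all add: s_def w_def)
      moreover have "w n = - s / Q n n" "cnj (w n) = - cnj s / Q n n"
        using \<open>cnj (Q n n) = Q n n\<close> by (simp_all add: w_def)
      ultimately show ?thesis
        using \<open>cnj (Q n n) = Q n n\<close> by (cases "Q n n = 0") (simp_all add: quad_form_Suc field_simps)
    qed
    finally show "0 \<le> quad_form n (\<lambda>i j. Q i j - Q i n * Q n j / Q n n) v"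
      using psd_fun_quad_form_nonneg[OF Q] by simp
  qed
qed

lemma psd_fun_gram:
  "psd_fun n Q \<Longrightarrow> \<exists>y. \<forall>i<n. \<forall>j<n. Q i j = (\<Sum>l<n. y l i * cnj (y l j))"
proof (induction n arbitrary: Q)
  case 0
  then show ?case by simp
next
  case (Suc n)
  have herm: "Q j i = cnj (Q i j)" if "i \<le> n" "j \<le> n" for i j
    using that by (intro psd_fun_hermitian[OF Suc.prems]) auto
  obtain y where y: "\<forall>i<n. \<forall>j<n. Q i j - Q i n * Q n j / Q n n = (\<Sum>l<n. y l i * cnj (y l j))"
    using Suc.IH[OF psd_fun_schur_complement[OF Suc.prems]] by blast
  \<comment> \<open>\<open>Q\<close> is its Schur complement plus the rank-one matrix \<open>z z\<^sup>H\<close>\<close>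
  define z where "z i = Q i n / of_real (sqrt (Re (Q n n)))" for i
  define y' where "y' l i = (if l < n then if i < n then y l i else 0 else z i)" for l i
  have "0 \<le> Q n n"
    using psd_fun_diag_nonneg[OF Suc.prems] by simp
  then have "of_real (sqrt (Re (Q n n))) * of_real (sqrt (Re (Q n n))) = Q n n"
    by (simp add: complex_eq_iff less_eq_complex_def)
  then have rank_one: "z i * cnj (z j) = Q i n * Q n j / Q n n" if "j \<le> n" for i j
    using herm[of n j] that by (simp add: z_def)
  have "Q i j = (\<Sum>l<Suc n. y' l i * cnj (y' l j))" if "i < Suc n" "j < Suc n" for i j
  proof (cases "i < n \<and> j < n")
    case True
    then show ?thesis
      using y rank_one by (simp add: y'_def algebra_simps)
  next
    case False
    then have "i = n \<or> j = n"
      using that by auto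
    moreover have "Q n i = 0" "Q n j = 0" if "Q n n = 0"
      using psd_fun_zero_diag[OF Suc.prems] \<open>i < Suc n\<close> \<open>j < Suc n\<close> that by auto
    ultimately have "Q i j = Q i n * Q n j / Q n n"
      using herm[of i n] \<open>i < Suc n\<close> by (cases "Q n n = 0") auto
    moreover have "(\<Sum>l<n. y' l i * cnj (y' l j)) = 0"
      using False by (intro sum.neutral) (auto simp: y'_def)
    ultimately show ?thesis
      using rank_one \<open>j < Suc n\<close> by (simp add: y'_def)
  qed
  then show ?case by blast
qed

lemma quad_form_add: "quad_form k (\<lambda>i j. Q i j + R i j) v = quad_form k Q v + quad_form k R v"
  by (simp add: quad_form_def sum.distrib algebra_simps)

lemma quad_form_scale: "quad_form k (\<lambda>i j. c * Q i j) v = c * quad_form k Q v"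
  by (simp add: quad_form_def sum_distrib_left ac_simps)

lemma psd_fun_add:
  assumes Q: "psd_fun k Q" and R: "psd_fun k R"
  shows "psd_fun k (\<lambda>i j. Q i j + R i j)"
proof (rule psd_funI)
  show "Q j i + R j i = cnj (Q i j + R i j)" if "i < k" "j < k" for i j
    using psd_fun_hermitian[OF Q that] psd_fun_hermitian[OF R that] by simp
  show "0 \<le> quad_form k (\<lambda>i j. Q i j + R i j) v" for v
    using psd_fun_quad_form_nonneg[OF Q] psd_fun_quad_form_nonneg[OF R] by (simp add: quad_form_add)
qed

lemma psd_fun_scale:
  assumes Q: "psd_fun k Q" and "0 \<le> c"
  shows "psd_fun k (\<lambda>i j. of_real c * Q i j)"
proof (rule psd_funI)
  show "of_real c * Q j i = cnj (of_real c * Q i j)" if "i < k" "j < k" for i j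
    using psd_fun_hermitian[OF Q that] by simp
  show "0 \<le> quad_form k (\<lambda>i j. of_real c * Q i j) v" for v
    using psd_fun_quad_form_nonneg[OF Q, of v] \<open>0 \<le> c\<close>
    by (simp add: quad_form_scale less_eq_complex_def)
qed

lemma psd_fun_sum:
  "(\<And>l. l < K \<Longrightarrow> psd_fun k (Q l)) \<Longrightarrow> psd_fun k (\<lambda>i j. \<Sum>l<(K::nat). Q l i j)"
proof (induction K)
  case 0
  show ?case
    by (intro psd_funI) (simp_all add: quad_form_def)
next
  case (Suc K)
  then show ?case
    by (simp add: psd_fun_add)
qed

lemma psd_fun_transpose:
  assumes Q: "psd_fun k Q"
  shows "psd_fun k (\<lambda>i j. Q j i)"
proof (rule psd_funI)
  show "Q i j = cnj (Q j i)" if "i < k" "j < k" for i j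
    using psd_fun_hermitian[OF Q that(2,1)] by simp
  have "quad_form k (\<lambda>i j. Q j i) v = quad_form k Q (\<lambda>i. cnj (v i))" for v
    unfolding quad_form_def by (subst sum.swap) (simp add: ac_simps)
  then show "0 \<le> quad_form k (\<lambda>i j. Q j i) v" for v
    using psd_fun_quad_form_nonneg[OF Q] by simp
qed

lemma psd_fun_congruence:
  assumes P: "psd_fun k P"
  shows "psd_fun k' (\<lambda>i j. \<Sum>a<k. \<Sum>c<k. C i a * P a c * cnj (C j c))"
proof (rule psd_funI)
  have cnj_P: "cnj (P a c) = P c a" if "a < k" "c < k" for a c
    using psd_fun_hermitian[OF P that] by simp
  fix i j
  have "cnj (\<Sum>a<k. \<Sum>c<k. C i a * P a c * cnj (C j c)) = (\<Sum>a<k. \<Sum>c<k. C j c * P c a * cnj (C i a))"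
    unfolding cnj_sum by (intro sum.cong refl) (simp add: cnj_P)
  then show "(\<Sum>a<k. \<Sum>c<k. C j a * P a c * cnj (C i c)) = cnj (\<Sum>a<k. \<Sum>c<k. C i a * P a c * cnj (C j c))"
    by (subst sum.swap) simp
next
  fix v
  define w where "w a = (\<Sum>j<k'. cnj (C j a) * v j)" for a
  have "quad_form k' (\<lambda>i j. \<Sum>a<k. \<Sum>c<k. C i a * P a c * cnj (C j c)) v =
    (\<Sum>i<k'. \<Sum>j<k'. \<Sum>a<k. \<Sum>c<k. cnj (v i) * C i a * P a c * cnj (C j c) * v j)"
    unfolding quad_form_def by (simp add: sum_distrib_left sum_distrib_right ac_simps)
  also have "\<dots> = (\<Sum>a<k. \<Sum>c<k. \<Sum>i<k'. \<Sum>j<k'. cnj (v i) * C i a * P a c * cnj (C j c) * v j)"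
    unfolding sum.cartesian_product
    by (rule sum.reindex_bij_witness[where i="\<lambda>(a, c, i, j). (i, j, a, c)" and j="\<lambda>(i, j, a, c). (a, c, i, j)"])
      auto
  also have "\<dots> = quad_form k P w"
    unfolding quad_form_def w_def cnj_sum by (simp add: sum_distrib_left sum_distrib_right ac_simps)
  finally show "0 \<le> quad_form k' (\<lambda>i j. \<Sum>a<k. \<Sum>c<k. C i a * P a c * cnj (C j c)) v"
    using psd_fun_quad_form_nonneg[OF P] by simp
qed

lemma psd_fun_kron:
  assumes A: "psd_fun m A" and B: "psd_fun n B"
  shows "psd_fun (m * n) (\<lambda>i j. A (i div n) (j div n) * B (i mod n) (j mod n))"
proof -
  obtain y where y: "\<forall>i<n. \<forall>j<n. B i j = (\<Sum>l<n. y l i * cnj (y l j))"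
    using psd_fun_gram[OF B] by blast
  \<comment> \<open>\<open>A \<otimes> y y\<^sup>H = C A C\<^sup>H\<close> for the \<open>m n \<times> m\<close> matrix \<open>C i a = [a = i div n] y (i mod n)\<close>\<close>
  define C where "C l i a = (if a = i div n then y l (i mod n) else 0)" for l i a
  have "psd_fun (m * n) (\<lambda>i j. \<Sum>l<n. \<Sum>a<m. \<Sum>c<m. C l i a * A a c * cnj (C l j c))"
    by (intro psd_fun_sum psd_fun_congruence A)
  moreover have "(\<Sum>l<n. \<Sum>a<m. \<Sum>c<m. C l i a * A a c * cnj (C l j c)) =
      A (i div n) (j div n) * B (i mod n) (j mod n)" if "i < m * n" "j < m * n" for i j
  proof -
    have "n > 0"
      using that by (cases n) auto
    have "i div n < m" "j div n < m"
      using that by (auto simp: less_mult_imp_div_less)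
    then have "(\<Sum>a<m. \<Sum>c<m. C l i a * A a c * cnj (C l j c)) =
        A (i div n) (j div n) * (y l (i mod n) * cnj (y l (j mod n)))" for l
      by (simp add: C_def if_distrib[where f=cnj] if_distrib[where f="\<lambda>x. _ * x"]
          if_distrib[where f="\<lambda>x. x * _"] cong: if_cong)
    then show ?thesis
      using y \<open>n > 0\<close> by (simp add: sum_distrib_left)
  qed
  ultimately show ?thesis
    by (simp cong: psd_fun_cong)
qed

lemma index_mult_mat_lessThan:
  "A \<in> carrier_mat r s \<Longrightarrow> B \<in> carrier_mat s t \<Longrightarrow> i < r \<Longrightarrow> j < t \<Longrightarrow>
   (A * B) $$ (i, j) = (\<Sum>k<s. A $$ (i, k) * B $$ (k, j))"
  by (simp add: scalar_prod_def atLeast0LessThan)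

lemma adj_carrier_mat: "A \<in> carrier_mat r s \<Longrightarrow> adj A \<in> carrier_mat s r"
  by (simp add: adj_def conj_mat_def)

lemma index_adj: "A \<in> carrier_mat r s \<Longrightarrow> i < s \<Longrightarrow> j < r \<Longrightarrow> adj A $$ (i, j) = cnj (A $$ (j, i))"
  by (simp add: adj_def conj_mat_def)

lemma adj_eq_iff:
  assumes "X \<in> carrier_mat k k"
  shows "adj X = X \<longleftrightarrow> (\<forall>i<k. \<forall>j<k. X $$ (j, i) = cnj (X $$ (i, j)))"
proof
  assume "adj X = X"
  then show "\<forall>i<k. \<forall>j<k. X $$ (j, i) = cnj (X $$ (i, j))"
    using assms by (metis index_adj)
next
  assume herm: "\<forall>i<k. \<forall>j<k. X $$ (j, i) = cnj (X $$ (i, j))"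
  show "adj X = X"
  proof (rule eq_matI)
    fix i j assume "i < dim_row X" "j < dim_col X"
    then show "adj X $$ (i, j) = X $$ (i, j)"
      using assms herm[rule_format, of j i] by (simp add: index_adj)
  qed (use adj_carrier_mat[OF assms] assms in auto)
qed

lemma inner_mult_mat_vec:
  assumes "X \<in> carrier_mat k k"
  shows "(X *\<^sub>v vec k v) \<bullet>c vec k v = quad_form k (\<lambda>i j. X $$ (i, j)) v"
  using assms unfolding quad_form_altdef
  by (simp add: scalar_prod_def atLeast0LessThan mult.commute)

lemma psd_iff_psd_fun: "psd k X \<longleftrightarrow> X \<in> carrier_mat k k \<and> psd_fun k (\<lambda>i j. X $$ (i, j))"
proof (cases "X \<in> carrier_mat k k")
  case True
  have "(\<forall>v \<in> carrier_vec k. let q = (X *\<^sub>v v) \<bullet>c v in Im q = 0 \<and> Re q \<ge> 0) \<longleftrightarrow>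
      (\<forall>v. 0 \<le> quad_form k (\<lambda>i j. X $$ (i, j)) v)"
  proof
    assume nonneg: "\<forall>v \<in> carrier_vec k. let q = (X *\<^sub>v v) \<bullet>c v in Im q = 0 \<and> Re q \<ge> 0"
    show "\<forall>v. 0 \<le> quad_form k (\<lambda>i j. X $$ (i, j)) v"
    proof
      fix v
      show "0 \<le> quad_form k (\<lambda>i j. X $$ (i, j)) v"
        using nonneg[rule_format, of "vec k v"] inner_mult_mat_vec[OF True]
        by (simp add: Let_def less_eq_complex_def)
    qed
  next
    assume nonneg: "\<forall>v. 0 \<le> quad_form k (\<lambda>i j. X $$ (i, j)) v"
    show "\<forall>v \<in> carrier_vec k. let q = (X *\<^sub>v v) \<bullet>c v in Im q = 0 \<and> Re q \<ge> 0"
    proof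
      fix v :: "complex vec" assume "v \<in> carrier_vec k"
      then have "v = vec k (\<lambda>i. v $ i)"
        by auto
      then have "(X *\<^sub>v v) \<bullet>c v = quad_form k (\<lambda>i j. X $$ (i, j)) (\<lambda>i. v $ i)"
        by (metis inner_mult_mat_vec[OF True])
      then show "let q = (X *\<^sub>v v) \<bullet>c v in Im q = 0 \<and> Re q \<ge> 0"
        using nonneg by (simp add: Let_def less_eq_complex_def)
    qed
  qed
  then show ?thesis
    using True by (simp add: psd_def psd_fun_def adj_eq_iff)
qed (simp add: psd_def)

lemma psd_transpose:
  assumes "psd k A"
  shows "psd k (transpose_mat A)"
proof -
  have A: "A \<in> carrier_mat k k" "psd_fun k (\<lambda>i j. A $$ (i, j))"
    using assms by (simp_all add: psd_iff_psd_fun)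
  have "psd_fun k (\<lambda>i j. transpose_mat A $$ (i, j))"
    using psd_fun_transpose[OF A(2)] A(1) by (simp cong: psd_fun_cong)
  then show ?thesis
    using A(1) by (simp add: psd_iff_psd_fun)
qed

lemma psd_congruence:
  assumes "psd k P" and C: "C \<in> carrier_mat k' k"
  shows "psd k' (C * P * adj C)"
proof -
  have P: "P \<in> carrier_mat k k" "psd_fun k (\<lambda>a c. P $$ (a, c))"
    using assms by (simp_all add: psd_iff_psd_fun)
  have "(C * P * adj C) $$ (i, j) = (\<Sum>a<k. \<Sum>c<k. C $$ (i, a) * P $$ (a, c) * cnj (C $$ (j, c)))"
    if "i < k'" "j < k'" for i j
  proof -
    have "C * P \<in> carrier_mat k' k"
      using C P(1) by simp
    then have "(C * P * adj C) $$ (i, j) = (\<Sum>c<k. (C * P) $$ (i, c) * adj C $$ (c, j))"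
      using that adj_carrier_mat[OF C] by (intro index_mult_mat_lessThan)
    also have "\<dots> = (\<Sum>c<k. (\<Sum>a<k. C $$ (i, a) * P $$ (a, c)) * cnj (C $$ (j, c)))"
      using that C index_mult_mat_lessThan[OF C P(1) \<open>i < k'\<close>]
      by (intro sum.cong refl) (simp add: index_adj)
    also have "\<dots> = (\<Sum>a<k. \<Sum>c<k. C $$ (i, a) * P $$ (a, c) * cnj (C $$ (j, c)))"
      by (subst sum.swap) (simp add: sum_distrib_right)
    finally show ?thesis .
  qed
  then have "psd_fun k' (\<lambda>i j. (C * P * adj C) $$ (i, j))"
    using psd_fun_congruence[OF P(2), of k' "\<lambda>i a. C $$ (i, a)"] by (simp cong: psd_fun_cong)
  then show ?thesis
    using C P(1) adj_carrier_mat[OF C] by (simp add: psd_iff_psd_fun)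
qed

lemma psd_kron:
  assumes "psd m A" and "psd n B"
  shows "psd (m * n) (kron m n A B)"
  using assms psd_fun_kron[of m "\<lambda>a c. A $$ (a, c)" n "\<lambda>b d. B $$ (b, d)"]
  by (simp add: psd_iff_psd_fun kron_def cong: psd_fun_cong)

lemma psd_nonneg_combination:
  fixes K :: nat
  assumes "\<And>l. l < K \<Longrightarrow> 0 \<le> p l \<and> psd N (\<sigma> l)"
  shows "psd N (mat N N (\<lambda>ij. \<Sum>l<K. complex_of_real (p l) * \<sigma> l $$ ij))"
proof -
  have "psd_fun N (\<lambda>i j. \<Sum>l<K. complex_of_real (p l) * \<sigma> l $$ (i, j))"
    using assms
    by (intro psd_fun_sum[of K N "\<lambda>l i j. complex_of_real (p l) * \<sigma> l $$ (i, j)"] psd_fun_scale)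
      (simp_all add: psd_iff_psd_fun)
  then show ?thesis
    by (simp add: psd_iff_psd_fun cong: psd_fun_cong)
qed

lemma sum_lessThan_mult:
  fixes m n :: nat
  shows "(\<Sum>k<m * n. f k) = (\<Sum>a<m. \<Sum>b<n. f (a * n + b))"
proof -
  have "sum f {a * n..<a * n + n} = (\<Sum>b<n. f (a * n + b))" for a
    using sum.shift_bounds_nat_ivl[of f 0 "a * n" n] by (simp add: atLeast0LessThan add.commute)
  then show ?thesis
    by (simp add: sum.nat_group[symmetric])
qed

lemma mult_add_less_mult: "a < m \<Longrightarrow> b < n \<Longrightarrow> a * n + b < m * (n::nat)"
  using mult_le_mono1[of "Suc a" m n] by simp

lemma kron_mult_kron:
  assumes "A \<in> carrier_mat m m" "C \<in> carrier_mat m m" "B \<in> carrier_mat n n" "D \<in> carrier_mat n n"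
  shows "kron m n A B * kron m n C D = kron m n (A * C) (B * D)"
proof (rule eq_matI)
  fix i j assume "i < dim_row (kron m n (A * C) (B * D))" "j < dim_col (kron m n (A * C) (B * D))"
  then have ij: "i < m * n" "j < m * n"
    by (simp_all add: kron_def)
  then have "n > 0"
    by (cases n) auto
  have div: "i div n < m" "j div n < m"
    using ij by (simp_all add: less_mult_imp_div_less)
  have "(kron m n A B * kron m n C D) $$ (i, j) =
      (\<Sum>k<m * n. kron m n A B $$ (i, k) * kron m n C D $$ (k, j))"
    using ij by (intro index_mult_mat_lessThan) (simp_all add: kron_def)
  also have "\<dots> = (\<Sum>a<m. \<Sum>b<n. A $$ (i div n, a) * B $$ (i mod n, b) *
      (C $$ (a, j div n) * D $$ (b, j mod n)))"
    unfolding sum_lessThan_mult using ij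
    by (intro sum.cong refl) (simp add: kron_def mult_add_less_mult)
  also have "\<dots> = (\<Sum>a<m. A $$ (i div n, a) * C $$ (a, j div n)) *
      (\<Sum>b<n. B $$ (i mod n, b) * D $$ (b, j mod n))"
    by (simp add: sum_product ac_simps)
  also have "\<dots> = kron m n (A * C) (B * D) $$ (i, j)"
    using assms ij div \<open>n > 0\<close> by (simp add: kron_def scalar_prod_def atLeast0LessThan)
  finally show "(kron m n A B * kron m n C D) $$ (i, j) = kron m n (A * C) (B * D) $$ (i, j)" .
qed (simp_all add: kron_def)

lemma ptrans_kron:
  assumes "A \<in> carrier_mat m m"
  shows "ptrans m n (kron m n A B) = kron m n (transpose_mat A) B"
proof (rule eq_matI)
  fix i j assume "i < dim_row (kron m n (transpose_mat A) B)" "j < dim_col (kron m n (transpose_mat A) B)"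
  then have ij: "i < m * n" "j < m * n"
    by (simp_all add: kron_def)
  then have "n > 0"
    by (cases n) auto
  have "i div n < m" "j div n < m"
    using ij by (simp_all add: less_mult_imp_div_less)
  then show "ptrans m n (kron m n A B) $$ (i, j) = kron m n (transpose_mat A) B $$ (i, j)"
    using assms ij \<open>n > 0\<close> by (simp add: ptrans_def kron_def mult_add_less_mult)
qed (simp_all add: ptrans_def kron_def)

lemma ptrans_combination:
  "ptrans m n (mat (m * n) (m * n) (\<lambda>ij. \<Sum>l<K. c l * \<sigma> l $$ ij)) =
   mat (m * n) (m * n) (\<lambda>ij. \<Sum>l<K. c l * ptrans m n (\<sigma> l) $$ ij)"
proof (rule eq_matI)
  fix i j assume "i < dim_row (mat (m * n) (m * n) (\<lambda>ij. \<Sum>l<K. c l * ptrans m n (\<sigma> l) $$ ij))"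
    "j < dim_col (mat (m * n) (m * n) (\<lambda>ij. \<Sum>l<K. c l * ptrans m n (\<sigma> l) $$ ij))"
  then have ij: "i < m * n" "j < m * n"
    by simp_all
  then have "n > 0"
    by (cases n) auto
  have "i div n < m" "j div n < m"
    using ij by (simp_all add: less_mult_imp_div_less)
  then show "ptrans m n (mat (m * n) (m * n) (\<lambda>ij. \<Sum>l<K. c l * \<sigma> l $$ ij)) $$ (i, j) =
      mat (m * n) (m * n) (\<lambda>ij. \<Sum>l<K. c l * ptrans m n (\<sigma> l) $$ ij) $$ (i, j)"
    using ij \<open>n > 0\<close> by (simp add: ptrans_def mult_add_less_mult)
qed (simp_all add: ptrans_def)

lemma mult_mat_combination:
  fixes M :: "'a::comm_semiring_0 mat"
  assumes "M \<in> carrier_mat N N" and "\<And>l. l < K \<Longrightarrow> \<sigma> l \<in> carrier_mat N N"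
  shows "M * mat N N (\<lambda>ij. \<Sum>l<K. c l * \<sigma> l $$ ij) = mat N N (\<lambda>ij. \<Sum>l<K. c l * (M * \<sigma> l) $$ ij)"
proof (rule eq_matI)
  fix i j assume "i < dim_row (mat N N (\<lambda>ij. \<Sum>l<K. c l * (M * \<sigma> l) $$ ij))"
    "j < dim_col (mat N N (\<lambda>ij. \<Sum>l<K. c l * (M * \<sigma> l) $$ ij))"
  then have ij: "i < N" "j < N"
    by simp_all
  have "(M * mat N N (\<lambda>ij. \<Sum>l<K. c l * \<sigma> l $$ ij)) $$ (i, j) =
      (\<Sum>k<N. M $$ (i, k) * (\<Sum>l<K. c l * \<sigma> l $$ (k, j)))"
    using assms(1) ij by (simp add: scalar_prod_def atLeast0LessThan)
  also have "\<dots> = (\<Sum>l<K. c l * (\<Sum>k<N. M $$ (i, k) * \<sigma> l $$ (k, j)))"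
    unfolding sum_distrib_left by (subst sum.swap) (simp add: ac_simps)
  also have "\<dots> = (\<Sum>l<K. c l * (M * \<sigma> l) $$ (i, j))"
    using index_mult_mat_lessThan[OF assms(1) assms(2) ij] by (intro sum.cong refl) simp
  finally show "(M * mat N N (\<lambda>ij. \<Sum>l<K. c l * \<sigma> l $$ ij)) $$ (i, j) =
      mat N N (\<lambda>ij. \<Sum>l<K. c l * (M * \<sigma> l) $$ ij) $$ (i, j)"
    using ij by simp
qed (use assms(1) in simp_all)

lemma conj_mat_mult_transpose:
  assumes "U \<in> carrier_mat k k" "R \<in> carrier_mat k k"
  shows "conj_mat U * transpose_mat R = transpose_mat (R * adj U)"
  using assms adj_carrier_mat[OF assms(1)] by (simp add: transpose_mult adj_def)

lemma U_positive_imp_psd_mult_adj: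
  assumes "unitary k U" and "U_positive k U R"
  shows "psd k (R * adj U)"
proof -
  have U: "U \<in> carrier_mat k k" "U * adj U = 1\<^sub>m k" and R: "R \<in> carrier_mat k k"
    using assms by (simp_all add: unitary_def U_positive_def)
  have "U * (adj U * R) = (U * adj U) * R"
    using U(1) R adj_carrier_mat[OF U(1)] by (simp add: assoc_mult_mat[of _ k k _ k _ k])
  then have "R * adj U = U * (adj U * R) * adj U"
    using U(2) R by simp
  moreover have "psd k (U * (adj U * R) * adj U)"
    using assms(2) U(1) by (intro psd_congruence) (simp_all add: U_positive_def)
  ultimately show ?thesis
    by simp
qed

lemma separable_decomposition:
  assumes "separable m n UA UB \<rho>"
  obtains K :: nat and p RA RB where "\<And>l. l < K \<Longrightarrow> 0 \<le> p l"
    and "\<And>l. l < K \<Longrightarrow> U_positive m UA (RA l)" and "\<And>l. l < K \<Longrightarrow> U_positive n UB (RB l)"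
    and "\<rho> = mat (m*n) (m*n) (\<lambda>ij. \<Sum>l<K. complex_of_real (p l) * kron m n (RA l) (RB l) $$ ij)"
proof -
  obtain K :: nat and p \<sigma> where p: "\<forall>l<K. 0 \<le> p l \<and> product_state m n UA UB (\<sigma> l)"
    and \<rho>: "\<rho> = mat (m*n) (m*n) (\<lambda>ij. \<Sum>l<K. complex_of_real (p l) * \<sigma> l $$ ij)"
    using assms unfolding separable_def by blast
  have "\<forall>l. \<exists>RA RB. l < K \<longrightarrow>
      \<sigma> l = kron m n RA RB \<and> U_positive m UA RA \<and> U_positive n UB RB"
    using p by (auto simp: product_state_def)
  then obtain RA RB where \<sigma>: "\<And>l. l < K \<Longrightarrow> \<sigma> l = kron m n (RA l) (RB l)"
    and "\<And>l. l < K \<Longrightarrow> U_positive m UA (RA l)" and "\<And>l. l < K \<Longrightarrow> U_positive n UB (RB l)"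
    by metis
  moreover have "\<rho> = mat (m*n) (m*n) (\<lambda>ij. \<Sum>l<K. complex_of_real (p l) * kron m n (RA l) (RB l) $$ ij)"
    unfolding \<rho> by (intro arg_cong[where f="mat (m*n) (m*n)"] ext sum.cong refl) (simp add: \<sigma>)
  ultimately show ?thesis
    using p that by blast
qed

lemma kron_mult_ptrans_combination:
  assumes U: "U \<in> carrier_mat m m" and V: "V \<in> carrier_mat n n"
    and A: "\<And>l. l < K \<Longrightarrow> A l \<in> carrier_mat m m" and B: "\<And>l. l < K \<Longrightarrow> B l \<in> carrier_mat n n"
  shows "kron m n U V * ptrans m n (mat (m*n) (m*n) (\<lambda>ij. \<Sum>l<K. c l * kron m n (A l) (B l) $$ ij)) =
    mat (m*n) (m*n) (\<lambda>ij. \<Sum>l<K. c l * kron m n (U * transpose_mat (A l)) (V * B l) $$ ij)"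
proof -
  have "ptrans m n (mat (m*n) (m*n) (\<lambda>ij. \<Sum>l<K. c l * kron m n (A l) (B l) $$ ij)) =
      mat (m*n) (m*n) (\<lambda>ij. \<Sum>l<K. c l * kron m n (transpose_mat (A l)) (B l) $$ ij)"
    unfolding ptrans_combination
    by (intro arg_cong[where f="mat (m*n) (m*n)"] ext sum.cong refl) (simp add: ptrans_kron A)
  also have "kron m n U V * \<dots> =
      mat (m*n) (m*n) (\<lambda>ij. \<Sum>l<K. c l * (kron m n U V * kron m n (transpose_mat (A l)) (B l)) $$ ij)"
    by (rule mult_mat_combination) (simp_all add: kron_def)
  also have "\<dots> = mat (m*n) (m*n) (\<lambda>ij. \<Sum>l<K. c l * kron m n (U * transpose_mat (A l)) (V * B l) $$ ij)"
    using U V A B by (intro arg_cong[where f="mat (m*n) (m*n)"] ext sum.cong refl) (simp add: kron_mult_kron)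
  finally show ?thesis .
qed

theorem proposition5p7:
  fixes m n :: nat and UA UB \<rho> :: "complex mat"
  assumes "unitary m UA" and "unitary n UB"
    and "quantum_U_state (m*n) (kron m n UA UB) \<rho>"
    and "separable m n UA UB \<rho>"
  shows "psd (m*n) (kron m n (conj_mat UA) (adj UB) * ptrans m n \<rho>)"
proof -
  have UA: "UA \<in> carrier_mat m m" and UB: "UB \<in> carrier_mat n n"
    using assms(1,2) by (simp_all add: unitary_def)
  obtain K :: nat and p RA RB where p: "\<And>l. l < K \<Longrightarrow> 0 \<le> p l"
    and RA: "\<And>l. l < K \<Longrightarrow> U_positive m UA (RA l)" and RB: "\<And>l. l < K \<Longrightarrow> U_positive n UB (RB l)"
    and \<rho>: "\<rho> = mat (m*n) (m*n) (\<lambda>ij. \<Sum>l<K. complex_of_real (p l) * kron m n (RA l) (RB l) $$ ij)"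
    using separable_decomposition[OF assms(4)] by blast
  have RA_carrier: "RA l \<in> carrier_mat m m" and RB_carrier: "RB l \<in> carrier_mat n n" if "l < K" for l
    using RA[OF that] RB[OF that] by (simp_all add: U_positive_def)
  have "psd (m*n) (kron m n (conj_mat UA * transpose_mat (RA l)) (adj UB * RB l))" if "l < K" for l
    unfolding conj_mat_mult_transpose[OF UA RA_carrier[OF that]]
    using U_positive_imp_psd_mult_adj[OF assms(1) RA[OF that]] RB[OF that]
    by (intro psd_kron psd_transpose) (simp_all add: U_positive_def)
  moreover have "kron m n (conj_mat UA) (adj UB) * ptrans m n \<rho> = mat (m*n) (m*n)
      (\<lambda>ij. \<Sum>l<K. complex_of_real (p l) * kron m n (conj_mat UA * transpose_mat (RA l)) (adj UB * RB l) $$ ij)"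
    unfolding \<rho> using UA UB RA_carrier RB_carrier
    by (intro kron_mult_ptrans_combination) (simp_all add: conj_mat_def adj_carrier_mat)
  ultimately show ?thesis
    using p by (simp add: psd_nonneg_combination)
qed

end
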